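(* Let $i\le k$ be positive integers and let $\rho$ be an $i$-polymatroid on $E$ that is an excluded minor for $\mathcal{D}_k$. Then for each $j$ with $i\le j\le k$, the $j$-dual of $\rho$ is an excluded minor for $\mathcal{D}_k$, and so is the $j$-polymatroid $\rho^j$ defined by $\rho^j(X)=\rho(X)+(j-i)|X|$ for $X\subseteq E$.
   Context: A polymatroid on $E$ is a function $\rho:2^E\to\mathbb{Z}$ that is normalized, non-decreasing and submodular; it is an $i$-polymatroid if $\rho(\{e\})\le i$ for all $e$. Any $i$-polymatroid is a $j$-polymatroid for $j\ge i$; its $j$-dual is $X\mapsto j|X|-\rho(E)+\rho(E-X)$. $\mathcal{D}_k$ is the class of polymatroids expressible as $r_{M_1}+\cdots+r_{M_k}$ for matroids $M_1,\dots,M_k$ on the ground set. Deletion and contraction: $\rho_{\backslash A}(X)=\rho(X)$, $\rho_{/A}(X)=\rho(X\cup A)-\rho(A)$ for $X\subseteq E-A$; minors are $(\rho_{\backslash A})_{/B}$ with $A,B$ disjoint, proper if $A\cup B\ne\emptyset$. An excluded minor for $\mathcal{D}_k$ is a polymatroid not in $\mathcal{D}_k$ all of whose proper minors are in $\mathcal{D}_k$. *)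

theory Defs
  imports Main
begin

text \<open>Set functions on a finite ground set E; only values on subsets of E matter.\<close>

definition polymatroid :: "'a set \<Rightarrow> ('a set \<Rightarrow> int) \<Rightarrow> bool" where
  "polymatroid E \<rho> \<longleftrightarrow>
     \<rho> {} = 0 \<and>
     (\<forall>X Y. X \<subseteq> Y \<and> Y \<subseteq> E \<longrightarrow> \<rho> X \<le> \<rho> Y) \<and>
     (\<forall>X Y. X \<subseteq> E \<and> Y \<subseteq> E \<longrightarrow> \<rho> (X \<union> Y) + \<rho> (X \<inter> Y) \<le> \<rho> X + \<rho> Y)"

definition ipolymatroid :: "nat \<Rightarrow> 'a set \<Rightarrow> ('a set \<Rightarrow> int) \<Rightarrow> bool" where
  "ipolymatroid i E \<rho> \<longleftrightarrow> polymatroid E \<rho> \<and> (\<forall>e\<in>E. \<rho> {e} \<le> int i)"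

definition matroid_rank :: "'a set \<Rightarrow> ('a set \<Rightarrow> int) \<Rightarrow> bool" where
  "matroid_rank E r \<longleftrightarrow>
     (\<forall>X. X \<subseteq> E \<longrightarrow> 0 \<le> r X \<and> r X \<le> int (card X)) \<and>
     (\<forall>X Y. X \<subseteq> Y \<and> Y \<subseteq> E \<longrightarrow> r X \<le> r Y) \<and>
     (\<forall>X Y. X \<subseteq> E \<and> Y \<subseteq> E \<longrightarrow> r (X \<union> Y) + r (X \<inter> Y) \<le> r X + r Y)"

definition in_Dk :: "nat \<Rightarrow> 'a set \<Rightarrow> ('a set \<Rightarrow> int) \<Rightarrow> bool" where
  "in_Dk k E \<rho> \<longleftrightarrow> polymatroid E \<rho> \<and>
     (\<exists>r :: nat \<Rightarrow> 'a set \<Rightarrow> int. (\<forall>l<k. matroid_rank E (r l)) \<and>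
        (\<forall>X. X \<subseteq> E \<longrightarrow> \<rho> X = (\<Sum>l<k. r l X)))"

definition jdual :: "nat \<Rightarrow> 'a set \<Rightarrow> ('a set \<Rightarrow> int) \<Rightarrow> 'a set \<Rightarrow> int" where
  "jdual j E \<rho> = (\<lambda>X. int j * int (card X) - \<rho> E + \<rho> (E - X))"

text \<open>Deletion of A (ground set becomes E - A) and contraction of A (ground set E - A).\<close>
definition pdelete :: "('a set \<Rightarrow> int) \<Rightarrow> 'a set \<Rightarrow> 'a set \<Rightarrow> int" where
  "pdelete \<rho> A = (\<lambda>X. \<rho> X)"

definition pcontract :: "('a set \<Rightarrow> int) \<Rightarrow> 'a set \<Rightarrow> 'a set \<Rightarrow> int" where
  "pcontract \<rho> A = (\<lambda>X. \<rho> (X \<union> A) - \<rho> A)"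

definition excluded_minor_Dk :: "nat \<Rightarrow> 'a set \<Rightarrow> ('a set \<Rightarrow> int) \<Rightarrow> bool" where
  "excluded_minor_Dk k E \<rho> \<longleftrightarrow> polymatroid E \<rho> \<and> \<not> in_Dk k E \<rho> \<and>
     (\<forall>A B. A \<subseteq> E \<and> B \<subseteq> E \<and> A \<inter> B = {} \<and> A \<union> B \<noteq> {} \<longrightarrow>
        in_Dk k (E - A - B) (pcontract (pdelete \<rho> A) B))"

end

theory Submission
  imports Defs
begin

text \<open>
  Summing the matroid duals shows that
  \<open>D\<^sub>k\<close> is closed under \<open>k\<close>-duality. If \<open>\<sigma>({e}) + m \<le> k\<close>, then \<open>e\<close> is a loop of at least \<open>m\<close>
  of the matroids, and turning it into a coloop in \<open>m\<close> of them shows that \<open>\<sigma>(X) + m|X|\<close> is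
  again in \<open>D\<^sub>k\<close>. Since the \<open>j\<close>-dual of \<open>\<sigma>\<close> is the \<open>k\<close>-dual of \<open>\<sigma>(X) + (k - j)|X|\<close>, \<open>D\<^sub>k\<close> is
  closed under the \<open>j\<close>-duality of \<open>j\<close>-polymatroids for \<open>j \<le> k\<close>. Both \<open>j\<close>-duality (an involution
  exchanging deletion and contraction) and adding \<open>m|X|\<close> commute with taking minors, so they map
  excluded minors to excluded minors; for \<open>\<rho>\<^sup>j\<close>, note that the \<open>j\<close>-dual of \<open>\<rho>\<^sup>j\<close> is the \<open>i\<close>-dual
  of \<open>\<rho>\<close>, which is not in \<open>D\<^sub>k\<close>.
\<close>

lemma pdelete_eq [simp]: "pdelete \<rho> A = \<rho>"
  by (simp add: pdelete_def)

lemma int_card_Un_Int: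
  assumes "finite A" "finite B"
  shows "int (card (A \<union> B)) + int (card (A \<inter> B)) = int (card A) + int (card B)"
  using card_Un_Int[OF assms] by linarith

lemma int_card_Diff_subset:
  assumes "finite B" "A \<subseteq> B"
  shows "int (card (B - A)) = int (card B) - int (card A)"
  using assms by (simp add: card_Diff_subset card_mono finite_subset)

lemma polymatroid_empty: "polymatroid E \<rho> \<Longrightarrow> \<rho> {} = 0"
  unfolding polymatroid_def by simp

lemma polymatroid_mono: "polymatroid E \<rho> \<Longrightarrow> X \<subseteq> Y \<Longrightarrow> Y \<subseteq> E \<Longrightarrow> \<rho> X \<le> \<rho> Y"
  unfolding polymatroid_def by simp

lemma polymatroid_submod:
  "polymatroid E \<rho> \<Longrightarrow> X \<subseteq> E \<Longrightarrow> Y \<subseteq> E \<Longrightarrow> \<rho> (X \<union> Y) + \<rho> (X \<inter> Y) \<le> \<rho> X + \<rho> Y"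
  unfolding polymatroid_def by simp

lemma polymatroid_nonneg: "polymatroid E \<rho> \<Longrightarrow> X \<subseteq> E \<Longrightarrow> 0 \<le> \<rho> X"
  using polymatroid_mono[of E \<rho> "{}" X] polymatroid_empty[of E \<rho>] by simp

lemma polymatroid_cong:
  assumes "polymatroid E \<rho>" "\<And>X. X \<subseteq> E \<Longrightarrow> \<rho> X = \<sigma> X"
  shows "polymatroid E \<sigma>"
  unfolding polymatroid_def
proof (intro conjI allI impI)
  show "\<sigma> {} = 0" using assms(2)[of "{}"] polymatroid_empty[OF assms(1)] by simp
next
  fix X Y assume "X \<subseteq> Y \<and> Y \<subseteq> E"
  then show "\<sigma> X \<le> \<sigma> Y"
    using assms(2)[of X] assms(2)[of Y] polymatroid_mono[OF assms(1), of X Y] by auto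
next
  fix X Y assume XY: "X \<subseteq> E \<and> Y \<subseteq> E"
  then have "X \<union> Y \<subseteq> E" "X \<inter> Y \<subseteq> E" by auto
  with XY show "\<sigma> (X \<union> Y) + \<sigma> (X \<inter> Y) \<le> \<sigma> X + \<sigma> Y"
    using assms(2) polymatroid_submod[OF assms(1), of X Y] by simp
qed

lemma polymatroid_sum:
  assumes "\<And>l. l \<in> L \<Longrightarrow> polymatroid E (f l)"
  shows "polymatroid E (\<lambda>X. \<Sum>l\<in>L. f l X)"
  unfolding polymatroid_def
proof (intro conjI allI impI)
  show "(\<Sum>l\<in>L. f l {}) = 0"
    using polymatroid_empty[OF assms] by simp
next
  fix X Y assume "X \<subseteq> Y \<and> Y \<subseteq> E"
  then show "(\<Sum>l\<in>L. f l X) \<le> (\<Sum>l\<in>L. f l Y)"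
    by (auto intro!: sum_mono polymatroid_mono[OF assms])
next
  fix X Y assume "X \<subseteq> E \<and> Y \<subseteq> E"
  then have "(\<Sum>l\<in>L. f l (X \<union> Y) + f l (X \<inter> Y)) \<le> (\<Sum>l\<in>L. f l X + f l Y)"
    by (auto intro!: sum_mono polymatroid_submod[OF assms])
  then show "(\<Sum>l\<in>L. f l (X \<union> Y)) + (\<Sum>l\<in>L. f l (X \<inter> Y)) \<le> (\<Sum>l\<in>L. f l X) + (\<Sum>l\<in>L. f l Y)"
    by (simp add: sum.distrib)
qed

lemma polymatroid_add_card:
  assumes "polymatroid E \<rho>" "finite E" "0 \<le> c"
  shows "polymatroid E (\<lambda>X. \<rho> X + c * int (card (X \<inter> C)))"
  unfolding polymatroid_def
proof (intro conjI allI impI)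
  show "\<rho> {} + c * int (card ({} \<inter> C)) = 0" using polymatroid_empty[OF assms(1)] by simp
next
  fix X Y assume XY: "X \<subseteq> Y \<and> Y \<subseteq> E"
  then have "card (X \<inter> C) \<le> card (Y \<inter> C)"
    using assms(2) by (meson Int_mono card_mono finite_Int finite_subset order_refl)
  then show "\<rho> X + c * int (card (X \<inter> C)) \<le> \<rho> Y + c * int (card (Y \<inter> C))"
    using polymatroid_mono[OF assms(1)] XY assms(3) by (simp add: add_mono mult_left_mono)
next
  fix X Y assume XY: "X \<subseteq> E \<and> Y \<subseteq> E"
  have "finite (X \<inter> C)" "finite (Y \<inter> C)" using XY assms(2) finite_subset by auto
  moreover have "(X \<union> Y) \<inter> C = (X \<inter> C) \<union> (Y \<inter> C)" "X \<inter> Y \<inter> C = (X \<inter> C) \<inter> (Y \<inter> C)"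
    by auto
  ultimately have "int (card ((X \<union> Y) \<inter> C)) + int (card (X \<inter> Y \<inter> C))
      = int (card (X \<inter> C)) + int (card (Y \<inter> C))"
    using int_card_Un_Int by simp
  then have "c * int (card ((X \<union> Y) \<inter> C)) + c * int (card (X \<inter> Y \<inter> C))
      = c * int (card (X \<inter> C)) + c * int (card (Y \<inter> C))"
    by (metis distrib_left)
  moreover have "\<rho> (X \<union> Y) + \<rho> (X \<inter> Y) \<le> \<rho> X + \<rho> Y"
    using polymatroid_submod[OF assms(1)] XY by simp
  ultimately show "\<rho> (X \<union> Y) + c * int (card ((X \<union> Y) \<inter> C)) + (\<rho> (X \<inter> Y) + c * int (card (X \<inter> Y \<inter> C)))
      \<le> \<rho> X + c * int (card (X \<inter> C)) + (\<rho> Y + c * int (card (Y \<inter> C)))"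
    by linarith
qed

lemma polymatroid_union_le:
  assumes "polymatroid E \<rho>" "finite W" "W \<subseteq> E" "Z \<subseteq> E" "\<forall>w\<in>W. \<rho> {w} \<le> c"
  shows "\<rho> (Z \<union> W) \<le> \<rho> Z + c * int (card W)"
  using assms(2-5)
proof (induction W rule: finite_induct)
  case empty
  then show ?case by simp
next
  case (insert w W)
  have "\<rho> ((Z \<union> W) \<union> {w}) + \<rho> ((Z \<union> W) \<inter> {w}) \<le> \<rho> (Z \<union> W) + \<rho> {w}"
    by (rule polymatroid_submod[OF assms(1)]) (use insert.prems in auto)
  moreover have "0 \<le> \<rho> ((Z \<union> W) \<inter> {w})"
    by (rule polymatroid_nonneg[OF assms(1)]) (use insert.prems in auto)
  moreover have "Z \<union> insert w W = (Z \<union> W) \<union> {w}" by auto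
  ultimately show ?case using insert by (simp add: algebra_simps)
qed

lemma contract_singleton_le:
  assumes "polymatroid E \<rho>" "B \<subseteq> E" "e \<in> E"
  shows "pcontract \<rho> B {e} \<le> \<rho> {e}"
proof -
  have "\<rho> ({e} \<union> B) + \<rho> ({e} \<inter> B) \<le> \<rho> {e} + \<rho> B"
    by (rule polymatroid_submod[OF assms(1)]) (use assms(2,3) in auto)
  moreover have "0 \<le> \<rho> ({e} \<inter> B)" by (rule polymatroid_nonneg[OF assms(1)]) (use assms(3) in auto)
  ultimately show ?thesis unfolding pcontract_def by simp
qed

lemma contract_add_card:
  assumes "finite X" "finite B" "X \<inter> B = {}"
  shows "pcontract (\<lambda>X. \<rho> X + c * int (card X)) B X = pcontract \<rho> B X + c * int (card X)"
  using card_Un_disjoint[OF assms] unfolding pcontract_def by (simp add: algebra_simps)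

lemma jdual_singleton_le:
  assumes "polymatroid E \<rho>" "e \<in> E"
  shows "jdual j E \<rho> {e} \<le> int j"
  using polymatroid_mono[OF assms(1), of "E - {e}" E] unfolding jdual_def by simp

lemma jdual_jdual:
  assumes "finite E" "X \<subseteq> E" "\<sigma> {} = 0"
  shows "jdual j E (jdual j E \<sigma>) X = \<sigma> X"
proof -
  have "E - (E - X) = X" using assms(2) by auto
  then show ?thesis
    unfolding jdual_def int_card_Diff_subset[OF assms(1,2)] using assms(3)
    by (simp add: algebra_simps)
qed

lemma jdual_add_card:
  assumes "finite E" "X \<subseteq> E"
  shows "jdual (j + m) E (\<lambda>X. \<sigma> X + int m * int (card X)) X = jdual j E \<sigma> X"
  unfolding jdual_def int_card_Diff_subset[OF assms] by (simp add: algebra_simps)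

lemma contract_jdual:
  assumes "finite E" "A \<subseteq> E" "B \<subseteq> E" "A \<inter> B = {}" "X \<subseteq> E - A - B"
  shows "pcontract (jdual j E \<rho>) B X = jdual j (E - A - B) (pcontract \<rho> A) X"
proof -
  have "card (X \<union> B) = card X + card B"
    using assms by (intro card_Un_disjoint) (auto intro: finite_subset)
  moreover have "(E - A - B) \<union> A = E - B" "(E - A - B - X) \<union> A = E - (X \<union> B)"
    using assms by auto
  ultimately show ?thesis unfolding jdual_def pcontract_def by (simp add: algebra_simps)
qed

lemma polymatroid_jdual:
  assumes "polymatroid E \<rho>" "finite E" "\<forall>e\<in>E. \<rho> {e} \<le> int j"
  shows "polymatroid E (jdual j E \<rho>)"
  unfolding polymatroid_def
proof (intro conjI allI impI)
  show "jdual j E \<rho> {} = 0" unfolding jdual_def by simp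
next
  fix X Y assume XY: "X \<subseteq> Y \<and> Y \<subseteq> E"
  have "\<rho> ((E - Y) \<union> (Y - X)) \<le> \<rho> (E - Y) + int j * int (card (Y - X))"
    using assms XY by (intro polymatroid_union_le) (auto intro: finite_subset)
  moreover have "(E - Y) \<union> (Y - X) = E - X" using XY by auto
  moreover have "int (card (Y - X)) = int (card Y) - int (card X)"
    using XY assms(2) finite_subset int_card_Diff_subset by blast
  ultimately show "jdual j E \<rho> X \<le> jdual j E \<rho> Y" unfolding jdual_def by (simp add: algebra_simps)
next
  fix X Y assume XY: "X \<subseteq> E \<and> Y \<subseteq> E"
  have "finite X" "finite Y" using XY assms(2) finite_subset by auto
  from int_card_Un_Int[OF this]
  have "int j * int (card (X \<union> Y)) + int j * int (card (X \<inter> Y)) = int j * int (card X) + int j * int (card Y)"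
    by (metis distrib_left)
  moreover have "\<rho> (E - (X \<inter> Y)) + \<rho> (E - (X \<union> Y)) \<le> \<rho> (E - X) + \<rho> (E - Y)"
    using polymatroid_submod[OF assms(1), of "E - X" "E - Y"] by (simp add: Diff_Int Diff_Un)
  ultimately show "jdual j E \<rho> (X \<union> Y) + jdual j E \<rho> (X \<inter> Y) \<le> jdual j E \<rho> X + jdual j E \<rho> Y"
    unfolding jdual_def by simp
qed

lemma matroid_rank_iff:
  "matroid_rank E r \<longleftrightarrow> polymatroid E r \<and> (\<forall>X. X \<subseteq> E \<longrightarrow> r X \<le> int (card X))"
proof
  assume "matroid_rank E r"
  moreover from this have "r {} = 0"
    unfolding matroid_rank_def by (metis card.empty empty_subsetI of_nat_0 order_antisym)
  ultimately show "polymatroid E r \<and> (\<forall>X. X \<subseteq> E \<longrightarrow> r X \<le> int (card X))"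
    unfolding matroid_rank_def polymatroid_def by simp
qed (auto simp: matroid_rank_def polymatroid_nonneg polymatroid_def)

lemma matroid_rank_singleton:
  assumes "matroid_rank E r" "e \<in> E"
  shows "r {e} = 0 \<or> r {e} = 1"
proof -
  have "0 \<le> r {e}" "r {e} \<le> int (card {e})"
    using assms unfolding matroid_rank_def by auto
  then show ?thesis by auto
qed

lemma matroid_rank_jdual:
  assumes "matroid_rank E r" "finite E"
  shows "matroid_rank E (jdual 1 E r)"
  unfolding matroid_rank_iff
proof
  have "polymatroid E r" "\<forall>e\<in>E. r {e} \<le> 1"
    using assms(1) unfolding matroid_rank_iff by auto
  then show "polymatroid E (jdual 1 E r)" using polymatroid_jdual assms(2) by fastforce
  show "\<forall>X\<subseteq>E. jdual 1 E r X \<le> int (card X)"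
    using polymatroid_mono[OF \<open>polymatroid E r\<close>] unfolding jdual_def by auto
qed

lemma matroid_rank_add_coloops:
  assumes "matroid_rank E r" "finite E" "\<forall>c\<in>C. r {c} = 0"
  shows "matroid_rank E (\<lambda>X. r X + int (card (X \<inter> C)))"
  unfolding matroid_rank_iff
proof
  have r: "polymatroid E r" "\<forall>X\<subseteq>E. r X \<le> int (card X)"
    using assms(1) unfolding matroid_rank_iff by auto
  show "polymatroid E (\<lambda>X. r X + int (card (X \<inter> C)))"
    using polymatroid_add_card[OF r(1) assms(2), of 1 C] by simp
  show "\<forall>X\<subseteq>E. r X + int (card (X \<inter> C)) \<le> int (card X)"
  proof (intro allI impI)
    fix X assume X: "X \<subseteq> E"
    then have fin: "finite X" using assms(2) finite_subset by auto
    have "r ((X - C) \<union> (X \<inter> C)) \<le> r (X - C) + 0 * int (card (X \<inter> C))"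
      using X assms(3) fin by (intro polymatroid_union_le[OF r(1)]) auto
    moreover have "(X - C) \<union> (X \<inter> C) = X" by auto
    moreover have "r (X - C) \<le> int (card (X - C))" using r(2) X by blast
    moreover have "card X = card (X \<inter> C) + card (X - C)" using card_Int_Diff[OF fin] .
    ultimately show "r X + int (card (X \<inter> C)) \<le> int (card X)" by simp
  qed
qed

lemma in_Dk_iff:
  "in_Dk k E \<rho> \<longleftrightarrow> (\<exists>r. (\<forall>l<k. matroid_rank E (r l)) \<and> (\<forall>X. X \<subseteq> E \<longrightarrow> \<rho> X = (\<Sum>l<k. r l X)))"
proof -
  have "polymatroid E \<rho>"
    if r: "\<forall>l<k. matroid_rank E (r l)" "\<forall>X. X \<subseteq> E \<longrightarrow> \<rho> X = (\<Sum>l<k. r l X)" for r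
  proof (rule polymatroid_cong)
    show "polymatroid E (\<lambda>X. \<Sum>l<k. r l X)"
      by (rule polymatroid_sum) (use r(1) in \<open>simp add: matroid_rank_iff\<close>)
    show "(\<Sum>l<k. r l X) = \<rho> X" if "X \<subseteq> E" for X using r(2) that by simp
  qed
  then show ?thesis unfolding in_Dk_def by blast
qed

lemma in_Dk_cong:
  assumes "in_Dk k E \<rho>" "\<And>X. X \<subseteq> E \<Longrightarrow> \<rho> X = \<sigma> X"
  shows "in_Dk k E \<sigma>"
proof -
  obtain r where r: "\<forall>l<k. matroid_rank E (r l)" "\<forall>X. X \<subseteq> E \<longrightarrow> \<rho> X = (\<Sum>l<k. r l X)"
    using assms(1) unfolding in_Dk_iff by blast
  then show ?thesis unfolding in_Dk_iff using assms(2) by (intro exI[of _ r]) simp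
qed

lemma in_Dk_kdual:
  assumes "in_Dk k E \<sigma>" "finite E"
  shows "in_Dk k E (jdual k E \<sigma>)"
proof -
  obtain r where r: "\<forall>l<k. matroid_rank E (r l)" "\<forall>X. X \<subseteq> E \<longrightarrow> \<sigma> X = (\<Sum>l<k. r l X)"
    using assms(1) unfolding in_Dk_iff by blast
  have "\<forall>l<k. matroid_rank E (jdual 1 E (r l))" using r(1) matroid_rank_jdual assms(2) by blast
  moreover have "jdual k E \<sigma> X = (\<Sum>l<k. jdual 1 E (r l) X)" for X
  proof -
    have "(\<Sum>l<k. jdual 1 E (r l) X) = int k * int (card X) - (\<Sum>l<k. r l E) + (\<Sum>l<k. r l (E - X))"
      by (simp add: jdual_def sum.distrib sum_subtractf)
    also have "\<dots> = jdual k E \<sigma> X" using r(2) by (simp add: jdual_def)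
    finally show ?thesis by simp
  qed
  ultimately show ?thesis unfolding in_Dk_iff by (intro exI[of _ "\<lambda>l. jdual 1 E (r l)"]) simp
qed

lemma card_loops_of_matroid_sum:
  assumes "\<forall>l<k. matroid_rank E (r l)" "e \<in> E"
  shows "int (card {l. l < k \<and> r l {e} = 0}) = int k - (\<Sum>l<k. r l {e})"
proof -
  have "(\<Sum>l<k. r l {e}) = (\<Sum>l<k. 1 - of_bool (r l {e} = 0))"
    using assms matroid_rank_singleton by (intro sum.cong) fastforce+
  also have "\<dots> = int k - int (card ({..<k} \<inter> {l. r l {e} = 0}))"
    by (simp add: sum_subtractf)
  also have "{..<k} \<inter> {l. r l {e} = 0} = {l. l < k \<and> r l {e} = 0}" by auto
  finally show ?thesis by simp
qed

lemma in_Dk_add_card: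
  assumes "in_Dk k E \<sigma>" "finite E" "\<forall>e\<in>E. \<sigma> {e} + int m \<le> int k"
  shows "in_Dk k E (\<lambda>X. \<sigma> X + int m * int (card X))"
proof -
  obtain r where r: "\<forall>l<k. matroid_rank E (r l)" "\<forall>X. X \<subseteq> E \<longrightarrow> \<sigma> X = (\<Sum>l<k. r l X)"
    using assms(1) unfolding in_Dk_iff by blast
  have "m \<le> card {l. l < k \<and> r l {e} = 0}" if "e \<in> E" for e
  proof -
    have "\<sigma> {e} = (\<Sum>l<k. r l {e})" "\<sigma> {e} + int m \<le> int k" using r(2) assms(3) that by auto
    then show ?thesis using card_loops_of_matroid_sum[OF r(1) that] by linarith
  qed
  then have "\<exists>T. T \<subseteq> {l. l < k \<and> r l {e} = 0} \<and> card T = m" if "e \<in> E" for e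
    using that by (meson obtain_subset_with_card_n)
  then obtain T where T: "\<And>e. e \<in> E \<Longrightarrow> T e \<subseteq> {l. l < k \<and> r l {e} = 0} \<and> card (T e) = m"
    by metis
  \<comment> \<open>\<open>C l\<close> is the set of loops of \<open>r l\<close> that become coloops; each \<open>e\<close> lies in exactly \<open>m\<close> of them.\<close>
  define C where "C l = {e\<in>E. l \<in> T e}" for l
  have "matroid_rank E (\<lambda>X. r l X + int (card (X \<inter> C l)))" if "l < k" for l
  proof (rule matroid_rank_add_coloops)
    show "matroid_rank E (r l)" using r(1) that by blast
    show "\<forall>c\<in>C l. r l {c} = 0" using T unfolding C_def by blast
  qed (rule assms(2))
  moreover have "\<sigma> X + int m * int (card X) = (\<Sum>l<k. r l X + int (card (X \<inter> C l)))"
    if X: "X \<subseteq> E" for X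
  proof -
    have "(\<Sum>l<k. card (X \<inter> C l)) = (\<Sum>l<k. card {e\<in>X. l \<in> T e})"
      using X unfolding C_def by (intro sum.cong arg_cong[where f = card]) auto
    also have "\<dots> = m * card X"
    proof (rule sum_multicount)
      show "finite X" using X assms(2) finite_subset by auto
      show "\<forall>e\<in>X. card {l\<in>{..<k}. l \<in> T e} = m"
      proof
        fix e assume "e \<in> X"
        then have "{l\<in>{..<k}. l \<in> T e} = T e" "card (T e) = m" using T X by auto
        then show "card {l\<in>{..<k}. l \<in> T e} = m" by simp
      qed
    qed simp
    finally have "(\<Sum>l<k. int (card (X \<inter> C l))) = int m * int (card X)"
      by (metis of_nat_mult of_nat_sum)
    then show ?thesis using r(2) X by (simp add: sum.distrib)
  qed
  ultimately show ?thesis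
    unfolding in_Dk_iff by (intro exI[of _ "\<lambda>l X. r l X + int (card (X \<inter> C l))"]) simp
qed

lemma in_Dk_jdual:
  assumes "in_Dk k E \<sigma>" "finite E" "\<forall>e\<in>E. \<sigma> {e} \<le> int j" "j \<le> k"
  shows "in_Dk k E (jdual j E \<sigma>)"
proof -
  have "in_Dk k E (\<lambda>X. \<sigma> X + int (k - j) * int (card X))"
    using assms by (intro in_Dk_add_card) auto
  then have "in_Dk k E (jdual (j + (k - j)) E (\<lambda>X. \<sigma> X + int (k - j) * int (card X)))"
    using in_Dk_kdual assms(2,4) by simp
  then show ?thesis by (rule in_Dk_cong) (simp add: jdual_add_card assms(2))
qed

lemma excluded_minor_Dk_jdual:
  assumes "finite E" "ipolymatroid j E \<rho>" "excluded_minor_Dk k E \<rho>" "j \<le> k"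
  shows "excluded_minor_Dk k E (jdual j E \<rho>)"
  unfolding excluded_minor_Dk_def
proof (intro conjI allI impI)
  have pm: "polymatroid E \<rho>" and sing: "\<forall>e\<in>E. \<rho> {e} \<le> int j"
    using assms(2) unfolding ipolymatroid_def by auto
  show "polymatroid E (jdual j E \<rho>)" using polymatroid_jdual[OF pm assms(1) sing] .
  show "\<not> in_Dk k E (jdual j E \<rho>)"
  proof
    assume "in_Dk k E (jdual j E \<rho>)"
    then have "in_Dk k E (jdual j E (jdual j E \<rho>))"
      by (rule in_Dk_jdual[OF _ assms(1) _ assms(4)]) (use jdual_singleton_le[OF pm] in blast)
    then have "in_Dk k E \<rho>"
      by (rule in_Dk_cong) (simp add: jdual_jdual assms(1) polymatroid_empty[OF pm])
    then show False using assms(3) unfolding excluded_minor_Dk_def by blast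
  qed
  fix A B assume AB: "A \<subseteq> E \<and> B \<subseteq> E \<and> A \<inter> B = {} \<and> A \<union> B \<noteq> {}"
  then have "in_Dk k (E - B - A) (pcontract (pdelete \<rho> B) A)"
    using assms(3) unfolding excluded_minor_Dk_def by blast
  moreover have "E - B - A = E - A - B" by blast
  ultimately have minor: "in_Dk k (E - A - B) (pcontract \<rho> A)" by simp
  have "pcontract \<rho> A {e} \<le> int j" if "e \<in> E - A - B" for e
  proof -
    have "pcontract \<rho> A {e} \<le> \<rho> {e}" by (rule contract_singleton_le[OF pm]) (use AB that in auto)
    then show ?thesis using sing that by force
  qed
  then have "in_Dk k (E - A - B) (jdual j (E - A - B) (pcontract \<rho> A))"
    using in_Dk_jdual[OF minor _ _ assms(4)] assms(1) by blast
  then show "in_Dk k (E - A - B) (pcontract (pdelete (jdual j E \<rho>) A) B)"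
  proof (rule in_Dk_cong)
    fix X assume "X \<subseteq> E - A - B"
    then show "jdual j (E - A - B) (pcontract \<rho> A) X = pcontract (pdelete (jdual j E \<rho>) A) B X"
      using contract_jdual[OF assms(1), of A B X] AB by simp
  qed
qed

lemma excluded_minor_Dk_add_card:
  assumes "finite E" "ipolymatroid i E \<rho>" "excluded_minor_Dk k E \<rho>" "i + m \<le> k"
  shows "excluded_minor_Dk k E (\<lambda>X. \<rho> X + int m * int (card X))"
  unfolding excluded_minor_Dk_def
proof (intro conjI allI impI)
  have pm: "polymatroid E \<rho>" and sing: "\<forall>e\<in>E. \<rho> {e} \<le> int i"
    using assms(2) unfolding ipolymatroid_def by auto
  show "polymatroid E (\<lambda>X. \<rho> X + int m * int (card X))"
    using polymatroid_add_card[OF pm assms(1), of "int m" UNIV] by simp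
  show "\<not> in_Dk k E (\<lambda>X. \<rho> X + int m * int (card X))"
  proof
    assume "in_Dk k E (\<lambda>X. \<rho> X + int m * int (card X))"
    then have "in_Dk k E (jdual (i + m) E (\<lambda>X. \<rho> X + int m * int (card X)))"
      by (rule in_Dk_jdual[OF _ assms(1) _ assms(4)]) (use sing in simp)
    then have "in_Dk k E (jdual i E \<rho>)"
      by (rule in_Dk_cong) (simp add: jdual_add_card assms(1))
    moreover have "excluded_minor_Dk k E (jdual i E \<rho>)"
      using excluded_minor_Dk_jdual[OF assms(1-3)] assms(4) by simp
    ultimately show False unfolding excluded_minor_Dk_def by blast
  qed
  fix A B assume AB: "A \<subseteq> E \<and> B \<subseteq> E \<and> A \<inter> B = {} \<and> A \<union> B \<noteq> {}"
  then have minor: "in_Dk k (E - A - B) (pcontract \<rho> B)"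
    using assms(3) unfolding excluded_minor_Dk_def by simp
  have "pcontract \<rho> B {e} + int m \<le> int k" if "e \<in> E - A - B" for e
  proof -
    have "pcontract \<rho> B {e} \<le> \<rho> {e}" by (rule contract_singleton_le[OF pm]) (use AB that in auto)
    moreover have "\<rho> {e} \<le> int i" using sing that by blast
    ultimately show ?thesis using assms(4) by linarith
  qed
  then have "in_Dk k (E - A - B) (\<lambda>X. pcontract \<rho> B X + int m * int (card X))"
    using in_Dk_add_card[OF minor] assms(1) by blast
  then show "in_Dk k (E - A - B) (pcontract (pdelete (\<lambda>X. \<rho> X + int m * int (card X)) A) B)"
  proof (rule in_Dk_cong)
    fix X assume "X \<subseteq> E - A - B"
    then have "finite X" "finite B" "X \<inter> B = {}" using AB assms(1) by (auto intro: finite_subset)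
    then show "pcontract \<rho> B X + int m * int (card X)
        = pcontract (pdelete (\<lambda>X. \<rho> X + int m * int (card X)) A) B X"
      by (simp add: contract_add_card)
  qed
qed

theorem corollary4p2:
  fixes E :: "'a set" and \<rho> :: "'a set \<Rightarrow> int" and i k j :: nat
  assumes "finite E"
    and "0 < i" and "i \<le> k"
    and "ipolymatroid i E \<rho>"
    and "excluded_minor_Dk k E \<rho>"
    and "i \<le> j" and "j \<le> k"
  shows "excluded_minor_Dk k E (jdual j E \<rho>)
       \<and> excluded_minor_Dk k E (\<lambda>X. \<rho> X + (int j - int i) * int (card X))"
proof
  have "ipolymatroid j E \<rho>"
    using assms(4,6) unfolding ipolymatroid_def by force
  then show "excluded_minor_Dk k E (jdual j E \<rho>)"
    using excluded_minor_Dk_jdual assms(1,5,7) by blast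
  show "excluded_minor_Dk k E (\<lambda>X. \<rho> X + (int j - int i) * int (card X))"
    using excluded_minor_Dk_add_card[OF assms(1,4,5), of "j - i"] assms(6,7) by simp
qed

end
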